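(* Let $G$ be a group with identity $\mathbf{1}$, $S\subseteq G$ inverse-closed, and $X=\mathrm{Cay}(G;S)$. If the group $\mathcal{A}^0_{\mathbf{1}}(X)$ of colour-preserving automorphisms of $X$ fixing $\mathbf{1}$ is trivial (equivalently, every colour-preserving automorphism of $X$ is a left translation $x\mapsto gx$), then $X$ is strongly CCA.
   Context: Graphs are simple (possibly infinite). For an inverse-closed subset $S$ of a group $G$, $\mathrm{Cay}(G;S)$ has vertex set $G$ and an edge from $g$ to $gs$ for each $g\in G$, $s\in S$; the edge $g$—$gs$ is coloured $\{s,s^{-1}\}$. A graph automorphism is colour-preserving if it maps every edge to an edge of the same colour, and colour-permuting if whenever two edges have the same colour their images also have the same colour. A map $\varphi\colon G\to G$ is affine if $\varphi(x)=\alpha(gx)$ for some $\alpha\in\mathrm{Aut}(G)$, $g\in G$. $\mathrm{Cay}(G;S)$ is strongly CCA if every colour-permuting automorphism of it is affine. *)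

theory Defs
  imports "HOL-Algebra.Group" "HOL-Algebra.Coset"
begin

definition cay_adj :: "('a, 'b) monoid_scheme \<Rightarrow> 'a set \<Rightarrow> 'a \<Rightarrow> 'a \<Rightarrow> bool" where
  "cay_adj G S x y \<longleftrightarrow> x \<in> carrier G \<and> y \<in> carrier G \<and> x \<noteq> y \<and> inv\<^bsub>G\<^esub> x \<otimes>\<^bsub>G\<^esub> y \<in> S"

text \<open>Colour of the edge from x to y = x s: the set {s, s^-1}.\<close>
definition cay_colour :: "('a, 'b) monoid_scheme \<Rightarrow> 'a \<Rightarrow> 'a \<Rightarrow> 'a set" where
  "cay_colour G x y = {inv\<^bsub>G\<^esub> x \<otimes>\<^bsub>G\<^esub> y, inv\<^bsub>G\<^esub> y \<otimes>\<^bsub>G\<^esub> x}"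

definition cay_aut :: "('a, 'b) monoid_scheme \<Rightarrow> 'a set \<Rightarrow> ('a \<Rightarrow> 'a) \<Rightarrow> bool" where
  "cay_aut G S f \<longleftrightarrow> bij_betw f (carrier G) (carrier G) \<and>
     (\<forall>x\<in>carrier G. \<forall>y\<in>carrier G. cay_adj G S (f x) (f y) \<longleftrightarrow> cay_adj G S x y)"

definition colour_preserving :: "('a, 'b) monoid_scheme \<Rightarrow> 'a set \<Rightarrow> ('a \<Rightarrow> 'a) \<Rightarrow> bool" where
  "colour_preserving G S f \<longleftrightarrow> cay_aut G S f \<and>
     (\<forall>x y. cay_adj G S x y \<longrightarrow> cay_colour G (f x) (f y) = cay_colour G x y)"

definition colour_permuting :: "('a, 'b) monoid_scheme \<Rightarrow> 'a set \<Rightarrow> ('a \<Rightarrow> 'a) \<Rightarrow> bool" where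
  "colour_permuting G S f \<longleftrightarrow> cay_aut G S f \<and>
     (\<forall>x y u v. cay_adj G S x y \<longrightarrow> cay_adj G S u v \<longrightarrow>
        cay_colour G x y = cay_colour G u v \<longrightarrow>
        cay_colour G (f x) (f y) = cay_colour G (f u) (f v))"

definition affine_map :: "('a, 'b) monoid_scheme \<Rightarrow> ('a \<Rightarrow> 'a) \<Rightarrow> bool" where
  "affine_map G f \<longleftrightarrow> (\<exists>\<alpha> \<in> iso G G. \<exists>g\<in>carrier G.
      \<forall>x\<in>carrier G. f x = \<alpha> (g \<otimes>\<^bsub>G\<^esub> x))"

definition strongly_CCA :: "('a, 'b) monoid_scheme \<Rightarrow> 'a set \<Rightarrow> bool" where
  "strongly_CCA G S \<longleftrightarrow> (\<forall>f. colour_permuting G S f \<longrightarrow> affine_map G f)"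

end

theory Submission
  imports Defs
begin

text \<open>Left translations are colour-preserving, and conjugating a colour-preserving automorphism
  by a colour-permuting one yields a colour-preserving automorphism again. If the only
  colour-preserving automorphisms are left translations, then for a colour-permuting \<open>f\<close> fixing
  \<open>\<one>\<close> the conjugate \<open>f \<circ> (\<lambda>x. g \<otimes> x) \<circ> f\<inverse>\<close> must be the translation by \<open>f g\<close>, i.e.
  \<open>f (g \<otimes> y) = f g \<otimes> f y\<close>: \<open>f\<close> is a group automorphism. A general colour-permuting map becomes
  such an \<open>f\<close> after composing with the translation by \<open>(f \<one>)\<inverse>\<close>, hence it is affine.\<close>

context group
begin

lemma cay_aut_closed:
  assumes "cay_aut G S f" "x \<in> carrier G"
  shows "f x \<in> carrier G"
  using assms unfolding cay_aut_def bij_betw_def by auto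

lemma cay_adj_carrier:
  assumes "cay_adj G S x y"
  shows "x \<in> carrier G" "y \<in> carrier G"
  using assms unfolding cay_adj_def by auto

lemma cay_aut_adj:
  assumes "cay_aut G S f" "cay_adj G S x y"
  shows "cay_adj G S (f x) (f y)"
  using assms cay_adj_carrier[OF assms(2)] unfolding cay_aut_def by blast

lemma cay_aut_comp:
  assumes "cay_aut G S f" "cay_aut G S h"
  shows "cay_aut G S (f \<circ> h)"
  using assms cay_aut_closed[OF assms(2)] unfolding cay_aut_def
  by (auto intro: bij_betw_trans)

lemma cay_aut_inv_into:
  assumes "cay_aut G S f"
  shows "cay_aut G S (inv_into (carrier G) f)"
proof -
  have f: "bij_betw f (carrier G) (carrier G)"
    using assms unfolding cay_aut_def by auto
  have fi: "bij_betw (inv_into (carrier G) f) (carrier G) (carrier G)"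
    using bij_betw_inv_into[OF f] .
  have "cay_adj G S (inv_into (carrier G) f x) (inv_into (carrier G) f y) = cay_adj G S x y"
    if "x \<in> carrier G" "y \<in> carrier G" for x y
    using that assms bij_betw_apply[OF fi] bij_betw_inv_into_right[OF f]
    unfolding cay_aut_def by metis
  with fi show ?thesis unfolding cay_aut_def by blast
qed

lemma inv_mult_translation:
  assumes "g \<in> carrier G" "x \<in> carrier G" "y \<in> carrier G"
  shows "inv (g \<otimes> x) \<otimes> (g \<otimes> y) = inv x \<otimes> y"
  using assms by (simp add: inv_mult_group m_assoc[symmetric]) (simp add: m_assoc)

lemma colour_preserving_translation:
  assumes g: "g \<in> carrier G"
  shows "colour_preserving G S (\<lambda>x. g \<otimes> x)"
proof -
  have "bij_betw (\<lambda>x. g \<otimes> x) (carrier G) (carrier G)"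
  proof (rule bij_betwI')
    show "\<And>y. y \<in> carrier G \<Longrightarrow> \<exists>x\<in>carrier G. y = g \<otimes> x"
      using g by (metis inv_closed m_assoc m_closed r_inv l_one)
  qed (use g in simp_all)
  then show ?thesis
    using g inv_mult_translation[OF g]
    unfolding colour_preserving_def cay_aut_def cay_adj_def cay_colour_def by auto
qed

lemma colour_preserving_comp:
  assumes h: "colour_preserving G S h" and k: "colour_preserving G S k"
  shows "colour_preserving G S (h \<circ> k)"
proof -
  have ha: "cay_aut G S h" and ka: "cay_aut G S k"
    using h k unfolding colour_preserving_def by auto
  have "cay_colour G (h (k x)) (h (k y)) = cay_colour G x y" if "cay_adj G S x y" for x y
  proof -
    have "cay_colour G (h (k x)) (h (k y)) = cay_colour G (k x) (k y)"
      using h cay_aut_adj[OF ka that] unfolding colour_preserving_def by blast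
    also have "\<dots> = cay_colour G x y"
      using k that unfolding colour_preserving_def by blast
    finally show ?thesis .
  qed
  then show ?thesis
    using cay_aut_comp[OF ha ka] unfolding colour_preserving_def by simp
qed

lemma colour_permuting_comp_preserving:
  assumes h: "colour_preserving G S h" and f: "colour_permuting G S f"
  shows "colour_permuting G S (h \<circ> f)"
  unfolding colour_permuting_def
proof (intro conjI allI impI)
  have ha: "cay_aut G S h" and fa: "cay_aut G S f"
    using h f unfolding colour_preserving_def colour_permuting_def by auto
  then show "cay_aut G S (h \<circ> f)"
    by (rule cay_aut_comp)
  have hf: "cay_colour G (h (f x)) (h (f y)) = cay_colour G (f x) (f y)"
    if "cay_adj G S x y" for x y
    using h cay_aut_adj[OF fa that] unfolding colour_preserving_def by blast
  fix x y u v
  assume xy: "cay_adj G S x y" and uv: "cay_adj G S u v"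
    and "cay_colour G x y = cay_colour G u v"
  then have "cay_colour G (f x) (f y) = cay_colour G (f u) (f v)"
    using f unfolding colour_permuting_def by blast
  then show "cay_colour G ((h \<circ> f) x) ((h \<circ> f) y) = cay_colour G ((h \<circ> f) u) ((h \<circ> f) v)"
    using hf[OF xy] hf[OF uv] by simp
qed

lemma colour_preserving_conj:
  assumes f: "colour_permuting G S f" and h: "colour_preserving G S h"
  shows "colour_preserving G S (\<lambda>x. f (h (inv_into (carrier G) f x)))"
    (is "colour_preserving G S ?c")
proof -
  define fi where "fi = inv_into (carrier G) f"
  have fa: "cay_aut G S f" and ha: "cay_aut G S h"
    using f h unfolding colour_permuting_def colour_preserving_def by auto
  have fia: "cay_aut G S fi"
    unfolding fi_def using cay_aut_inv_into[OF fa] .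
  have f_fi: "f (fi x) = x" if "x \<in> carrier G" for x
    using fa that unfolding fi_def cay_aut_def by (blast intro: bij_betw_inv_into_right)
  have "cay_aut G S (f \<circ> (h \<circ> fi))"
    by (intro cay_aut_comp fa ha fia)
  moreover have "cay_colour G (?c x) (?c y) = cay_colour G x y" if adj: "cay_adj G S x y" for x y
  proof -
    note xy = cay_adj_carrier[OF adj]
    have adj_fi: "cay_adj G S (fi x) (fi y)"
      using cay_aut_adj[OF fia adj] .
    have "cay_adj G S (h (fi x)) (h (fi y))"
      using cay_aut_adj[OF ha adj_fi] .
    moreover have "cay_colour G (h (fi x)) (h (fi y)) = cay_colour G (fi x) (fi y)"
      using h adj_fi unfolding colour_preserving_def by blast
    ultimately have "cay_colour G (f (h (fi x))) (f (h (fi y))) = cay_colour G (f (fi x)) (f (fi y))"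
      using f adj_fi unfolding colour_permuting_def by blast
    then show ?thesis
      using f_fi xy unfolding fi_def by simp
  qed
  ultimately show ?thesis
    unfolding colour_preserving_def fi_def by (simp add: o_def)
qed

lemma colour_preserving_eq_translation:
  assumes stab: "\<forall>f. colour_preserving G S f \<and> f \<one> = \<one> \<longrightarrow> (\<forall>x\<in>carrier G. f x = x)"
    and h: "colour_preserving G S h" and x: "x \<in> carrier G"
  shows "h x = h \<one> \<otimes> x"
proof -
  have h1: "h \<one> \<in> carrier G" and hx: "h x \<in> carrier G"
    using h x cay_aut_closed unfolding colour_preserving_def by auto
  have "colour_preserving G S ((\<lambda>y. inv (h \<one>) \<otimes> y) \<circ> h)"
    by (intro colour_preserving_comp colour_preserving_translation h) (simp add: h1)
  moreover have "((\<lambda>y. inv (h \<one>) \<otimes> y) \<circ> h) \<one> = \<one>"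
    using h1 by simp
  ultimately have "inv (h \<one>) \<otimes> h x = x"
    using stab x by auto
  then show ?thesis
    using h1 hx by (metis inv_closed l_one m_assoc r_inv)
qed

lemma colour_permuting_hom:
  assumes transl: "\<And>h x. colour_preserving G S h \<Longrightarrow> x \<in> carrier G \<Longrightarrow> h x = h \<one> \<otimes> x"
    and f: "colour_permuting G S f" and f1: "f \<one> = \<one>"
    and g: "g \<in> carrier G" and y: "y \<in> carrier G"
  shows "f (g \<otimes> y) = f g \<otimes> f y"
proof -
  define fi where "fi = inv_into (carrier G) f"
  have fa: "cay_aut G S f"
    using f unfolding colour_permuting_def by auto
  have fi_f: "fi (f x) = x" if "x \<in> carrier G" for x
    using fa that unfolding fi_def cay_aut_def by (blast intro: bij_betw_inv_into_left)
  have "colour_preserving G S (\<lambda>x. f (g \<otimes> fi x))"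
    unfolding fi_def using colour_preserving_conj[OF f colour_preserving_translation[OF g]] .
  then have "f (g \<otimes> fi (f y)) = f (g \<otimes> fi \<one>) \<otimes> f y"
    using transl cay_aut_closed[OF fa y] by blast
  moreover have "fi \<one> = \<one>"
    using fi_f[of \<one>] f1 by simp
  ultimately show ?thesis
    using fi_f y g by simp
qed

lemma colour_permuting_iso:
  assumes transl: "\<And>h x. colour_preserving G S h \<Longrightarrow> x \<in> carrier G \<Longrightarrow> h x = h \<one> \<otimes> x"
    and f: "colour_permuting G S f" and f1: "f \<one> = \<one>"
  shows "f \<in> iso G G"
  using f colour_permuting_hom[OF transl f f1]
  unfolding iso_def hom_def colour_permuting_def cay_aut_def by (auto simp: bij_betw_def)

lemma strongly_CCA_if_translations:
  assumes transl: "\<And>h x. colour_preserving G S h \<Longrightarrow> x \<in> carrier G \<Longrightarrow> h x = h \<one> \<otimes> x"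
  shows "strongly_CCA G S"
  unfolding strongly_CCA_def
proof (intro allI impI)
  fix f assume f: "colour_permuting G S f"
  have fa: "cay_aut G S f"
    using f unfolding colour_permuting_def by auto
  define a where "a = f \<one>"
  have a: "a \<in> carrier G"
    unfolding a_def using cay_aut_closed[OF fa] by simp
  define f0 where "f0 = (\<lambda>x. inv a \<otimes> f x)"
  have "colour_permuting G S f0"
    unfolding f0_def
    using colour_permuting_comp_preserving[OF colour_preserving_translation f, of "inv a"] a
    by (simp add: o_def)
  moreover have "f0 \<one> = \<one>"
    using a by (simp add: f0_def a_def)
  ultimately have iso: "f0 \<in> iso G G"
    using colour_permuting_iso[OF transl] by blast
  then have f0_bij: "bij_betw f0 (carrier G) (carrier G)"
    by (simp add: iso_def)
  define g where "g = inv_into (carrier G) f0 a"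
  have g: "g \<in> carrier G" and f0_g: "f0 g = a"
    unfolding g_def using f0_bij a bij_betw_inv_into_right bij_betw_apply[OF bij_betw_inv_into]
    by fastforce+
  have "f x = f0 (g \<otimes> x)" if x: "x \<in> carrier G" for x
  proof -
    have "f0 (g \<otimes> x) = a \<otimes> (inv a \<otimes> f x)"
      using iso g x f0_g unfolding iso_def hom_def f0_def by simp
    also have "\<dots> = f x"
      using a cay_aut_closed[OF fa x] by (simp add: m_assoc[symmetric])
    finally show ?thesis by simp
  qed
  with iso g show "affine_map G f"
    unfolding affine_map_def by blast
qed

end

theorem corollary4p7:
  fixes G :: "('a, 'b) monoid_scheme" and S :: "'a set"
  assumes "group G"
    and "S \<subseteq> carrier G"
    and "\<forall>s\<in>S. inv\<^bsub>G\<^esub> s \<in> S"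
    and "\<forall>f. colour_preserving G S f \<and> f \<one>\<^bsub>G\<^esub> = \<one>\<^bsub>G\<^esub> \<longrightarrow>
                (\<forall>x\<in>carrier G. f x = x)"
  shows "strongly_CCA G S"
proof -
  interpret group G by fact
  show ?thesis
    using strongly_CCA_if_translations colour_preserving_eq_translation[OF assms(4)] by blast
qed

end
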